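(* Under Algorithm 2(b) below, the decoding event occurs at a given receiver in a given slot if, in that slot, either (a) the receiver has a successful reception which results in its virtual queue being empty; or (b) the receiver has a successful reception and the receiver was a leader at the beginning of the slot.
   Context: Model: a sender broadcasts packets $\mathbf{p}_1,\mathbf{p}_2,\dots$ (vectors over $\mathbb{F}_q$, $q\ge n$, indexed by arrival order) to $n$ receivers over a slotted packet erasure broadcast channel with perfect feedback; in each slot the sender transmits at most one linear combination of queued packets and each receiver either receives it or suffers an erasure. A node's knowledge space is the space of coefficient vectors of linear combinations it can compute; the virtual queue of receiver $j$ has size $\dim$(sender's knowledge space) $-\dim$(receiver $j$'s knowledge space). A node has seen $\mathbf{p}_k$ if it can compute $\mathbf{p}_k+\mathbf{q}$ where $\mathbf{q}$ involves only packets with index greater than $k$. If receiver $r$ has seen $\mathbf{p}_k$, its witness $\mathbf{W}_r(\mathbf{p}_k)$ is the unique linear combination known to $r$ of the form $\mathbf{p}_k+\mathbf{q}$ with $\mathbf{q}$ involving only packets of index greater than $k$ not seen by $r$. A receiver's next unseen packet is its lowest-index unseen packet. Algorithm 2(b): the sender drops a packet once all receivers have seen it. Coding module: let $u_1<\dots<u_m$ be the distinct indices of next unseen packets of receivers whose next unseen packet has arrived, and $R(u_i)$ the set of those receivers whose next unseen packet is $\mathbf{p}_{u_i}$; for $j=1,\dots,m$, with $\mathbf{y}_r=\sum_{i<j}\alpha_i\mathbf{W}_r(\mathbf{p}_{u_i})$ for $r\in R(u_j)$, pick $\alpha_j\in\mathbb{F}_q$ different from the coefficient of $\mathbf{p}_{u_j}$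 in every such $\mathbf{y}_r$; transmit $\sum_i\alpha_i\mathbf{p}_{u_i}$. The decoding event at a receiver is the event that all packets the receiver has seen become decoded by it. A leader is a receiver that has seen the maximum number of packets among all receivers at the given time (there may be several). *)

theory Defs
  imports Complex_Main "HOL-Library.Function_Algebras"
begin

text \<open>Coefficient vectors over the field 'a: functions nat => 'a; packet p_k
  (k >= 1, indexed by arrival order) corresponds to the unit vector unitv k.\<close>

definition scl :: "'a::field \<Rightarrow> (nat \<Rightarrow> 'a) \<Rightarrow> (nat \<Rightarrow> 'a)" where
  "scl a v = (\<lambda>i. a * v i)"

definition kspan :: "(nat \<Rightarrow> 'a::field) set \<Rightarrow> (nat \<Rightarrow> 'a) set" where
  "kspan S = Modules.module.span scl S"

definition kdim :: "(nat \<Rightarrow> 'a::field) set \<Rightarrow> nat" where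
  "kdim S = Vector_Spaces.vector_space.dim scl S"

definition unitv :: "nat \<Rightarrow> nat \<Rightarrow> 'a::field" where
  "unitv k = (\<lambda>i. if i = k then 1 else 0)"

definition sender_space :: "nat \<Rightarrow> (nat \<Rightarrow> 'a::field) set" where
  "sender_space a = kspan (unitv ` {1..a})"

definition vqueue :: "nat \<Rightarrow> (nat \<Rightarrow> 'a::field) set \<Rightarrow> nat" where
  "vqueue a K = kdim (sender_space a :: (nat \<Rightarrow> 'a) set) - kdim K"

text \<open>A node with knowledge space K has seen p_k: it can compute p_k + q with q
  involving only packets of index > k.\<close>
definition seen :: "(nat \<Rightarrow> 'a::field) set \<Rightarrow> nat \<Rightarrow> bool" where
  "seen K k \<longleftrightarrow> k \<ge> 1 \<and> (\<exists>v\<in>K. v k = 1 \<and> (\<forall>i<k. v i = 0))"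

definition decoded :: "(nat \<Rightarrow> 'a::field) set \<Rightarrow> nat \<Rightarrow> bool" where
  "decoded K k \<longleftrightarrow> unitv k \<in> K"

definition witness :: "(nat \<Rightarrow> 'a::field) set \<Rightarrow> nat \<Rightarrow> (nat \<Rightarrow> 'a)" where
  "witness K k = (THE w. w \<in> K \<and> w k = 1 \<and> (\<forall>i<k. w i = 0)
                        \<and> (\<forall>i>k. seen K i \<longrightarrow> w i = 0))"

definition next_unseen :: "(nat \<Rightarrow> 'a::field) set \<Rightarrow> nat" where
  "next_unseen K = (LEAST k. k \<ge> 1 \<and> \<not> seen K k)"

definition num_seen :: "(nat \<Rightarrow> 'a::field) set \<Rightarrow> nat" where
  "num_seen K = card {k. seen K k}"

definition is_leader :: "nat \<Rightarrow> (nat \<Rightarrow> (nat \<Rightarrow> 'a::field) set) \<Rightarrow> nat \<Rightarrow> bool" where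
  "is_leader n K j \<longleftrightarrow> j < n \<and> (\<forall>r<n. num_seen (K r) \<le> num_seen (K j))"

definition decoding_event :: "(nat \<Rightarrow> 'a::field) set \<Rightarrow> bool" where
  "decoding_event K \<longleftrightarrow> (\<forall>k. seen K k \<longrightarrow> decoded K k)"

text \<open>Coding module of Algorithm 2(b): with a packets arrived and receiver
  knowledge spaces K r (r < n), c is a possible transmitted coefficient vector.\<close>
definition coding_ok :: "nat \<Rightarrow> nat \<Rightarrow> (nat \<Rightarrow> (nat \<Rightarrow> 'a::field) set) \<Rightarrow> (nat \<Rightarrow> 'a) \<Rightarrow> bool" where
  "coding_ok n a K c \<longleftrightarrow>
    (let U = {next_unseen (K r) | r. r < n \<and> next_unseen (K r) \<le> a};
         R = (\<lambda>u. {r. r < n \<and> next_unseen (K r) = u})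
     in \<exists>\<alpha> :: nat \<Rightarrow> 'a.
          (\<forall>u\<in>U. \<forall>r\<in>R u.
              \<alpha> u \<noteq> (\<Sum>u'\<in>{u'\<in>U. u' < u}. scl (\<alpha> u') (witness (K r) u')) u)
          \<and> c = (\<Sum>u\<in>U. scl (\<alpha> u) (unitv u)))"

text \<open>Knowledge space of receiver r at the beginning of slot t (slots 0,1,...):
  span of the coefficient vectors it received in earlier slots.\<close>
definition know :: "(nat \<Rightarrow> nat \<Rightarrow> bool) \<Rightarrow> (nat \<Rightarrow> nat \<Rightarrow> 'a::field) \<Rightarrow> nat \<Rightarrow> nat \<Rightarrow> (nat \<Rightarrow> 'a) set" where
  "know rcv c t r = kspan {c s | s. s < t \<and> rcv s r}"

end

theory Submission
  imports Defs
begin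

text \<open>The packets a receiver has seen always form a prefix \<open>p\<^sub>1, \<dots>, p\<^sub>m\<close> of the arrivals: one
  reception adds at most one newly seen packet, and the coefficient rule of the coding module makes
  a receiving receiver see its next unseen packet \<open>p\<^bsub>m+1\<^esub>\<close> as soon as it has arrived. If in
  addition the knowledge space only involves \<open>p\<^sub>1, \<dots>, p\<^sub>m\<close>, every witness is a unit vector,
  so everything seen is decoded. In case (a) the knowledge space is the whole sender space. In
  case (b) the leader's next unseen packet has the largest index among all receivers, so no
  transmission up to this slot involves a later packet.\<close>

interpretation V: vector_space "scl :: 'a::field \<Rightarrow> (nat \<Rightarrow> 'a) \<Rightarrow> (nat \<Rightarrow> 'a)"
  by unfold_locales (auto simp: scl_def algebra_simps)

lemma kspan_eq_span: "kspan = V.span"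
  by (rule ext) (simp add: kspan_def)

lemma kdim_eq_dim: "kdim = V.dim"
  by (rule ext) (simp add: kdim_def)

lemma scl_apply [simp]: "scl a v i = a * v i"
  by (simp add: scl_def)

lemma sum_apply: "sum f A i = (\<Sum>x\<in>A. f x i)"
  by (induction A rule: infinite_finite_induct) auto

lemma (in vector_space) subspace_full_dim_contains_spanning_set:
  assumes "subspace K" "K \<subseteq> span W" "finite W" "card W \<le> dim K"
  shows "W \<subseteq> K"
proof
  fix w assume "w \<in> W"
  show "w \<in> K"
  proof (rule ccontr)
    assume "w \<notin> K"
    obtain B where B: "B \<subseteq> K" "independent B" "K \<subseteq> span B" "card B = dim K"
      by (rule basis_exists)
    have "span B \<subseteq> K"
      by (rule span_minimal[OF B(1) assms(1)])
    then have "w \<notin> span B"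
      using \<open>w \<notin> K\<close> by blast
    then have "w \<notin> B" "independent (insert w B)"
      using span_base[of w B] independent_insertI[OF _ B(2)] by blast+
    moreover have "insert w B \<subseteq> span W"
      using B(1) assms(2) span_base[OF \<open>w \<in> W\<close>] by blast
    ultimately have "finite (insert w B) \<and> card (insert w B) \<le> card W"
      by (intro independent_span_bound[OF assms(3)])
    then show False
      using \<open>w \<notin> B\<close> B(4) assms(4) by (elim conjE) simp
  qed
qed

subsection \<open>Coefficient vectors supported on the first packets\<close>

lemma sum_unitv_apply:
  assumes "finite U"
  shows "(\<Sum>u\<in>U. scl (\<alpha> u) (unitv u :: nat \<Rightarrow> 'a::field)) i = (if i \<in> U then \<alpha> i else 0)"
proof -
  have "(\<Sum>u\<in>U. scl (\<alpha> u) (unitv u :: nat \<Rightarrow> 'a)) i = (\<Sum>u\<in>U. \<alpha> u * unitv u i)"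
    by (simp add: sum_apply)
  also have "\<dots> = (\<Sum>u\<in>U. if i = u then \<alpha> u else 0)"
    by (rule sum.cong) (auto simp: unitv_def)
  finally show ?thesis
    using assms by simp
qed

lemma subspace_vanishing_outside: "V.subspace {v :: nat \<Rightarrow> 'a::field. v 0 = 0 \<and> (\<forall>i>b. v i = 0)}"
  by (auto simp: V.subspace_def scl_def)

lemma sender_space_eq: "sender_space b = {v :: nat \<Rightarrow> 'a::field. v 0 = 0 \<and> (\<forall>i>b. v i = 0)}"
proof
  show "sender_space b \<subseteq> {v :: nat \<Rightarrow> 'a. v 0 = 0 \<and> (\<forall>i>b. v i = 0)}"
    unfolding sender_space_def kspan_eq_span
    by (rule V.span_minimal[OF _ subspace_vanishing_outside]) (auto simp: unitv_def)
  show "{v :: nat \<Rightarrow> 'a. v 0 = 0 \<and> (\<forall>i>b. v i = 0)} \<subseteq> sender_space b"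
  proof
    fix v :: "nat \<Rightarrow> 'a" assume v: "v \<in> {v. v 0 = 0 \<and> (\<forall>i>b. v i = 0)}"
    have "v = (\<Sum>i\<in>{1..b}. scl (v i) (unitv i))"
      using v by (auto simp: fun_eq_iff sum_unitv_apply not_le Suc_le_eq)
    also have "\<dots> \<in> sender_space b"
      unfolding sender_space_def kspan_eq_span by (intro V.span_sum V.span_scale V.span_base) auto
    finally show "v \<in> sender_space b" .
  qed
qed

lemma mem_sender_space: "v \<in> sender_space b \<longleftrightarrow> v 0 = 0 \<and> (\<forall>i>b. v i = 0)"
  by (simp add: sender_space_eq)

lemma subspace_sender_space: "V.subspace (sender_space b)"
  by (simp add: sender_space_def kspan_eq_span)

lemma sender_space_mono: "a \<le> b \<Longrightarrow> sender_space a \<subseteq> sender_space b"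
  by (auto simp: mem_sender_space)

lemma unitv_eq_iff: "unitv i = (unitv k :: nat \<Rightarrow> 'a::field) \<longleftrightarrow> i = k"
  by (metis unitv_def zero_neq_one)

lemma independent_unitv: "V.independent (unitv ` S :: (nat \<Rightarrow> 'a::field) set)"
  unfolding V.independent_explicit_finite_subsets
proof (intro allI impI ballI)
  fix T u v
  assume T: "T \<subseteq> unitv ` S" "finite T" and sum0: "(\<Sum>v\<in>T. scl (u v) v) = (0 :: nat \<Rightarrow> 'a)"
    and "v \<in> T"
  then obtain k where k: "v = unitv k" by blast
  have "0 = (\<Sum>v'\<in>T. u v' * v' k)"
    using sum0 by (simp add: fun_eq_iff sum_apply)
  also have "\<dots> = (\<Sum>v'\<in>T. if v' = v then u v else 0)"
  proof (rule sum.cong[OF refl])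
    fix v' assume "v' \<in> T"
    then obtain k' where "v' = unitv k'"
      using T(1) by blast
    moreover have "v' k = (if v' = v then 1 else 0)"
      using k unitv_eq_iff[of k' k] \<open>v' = unitv k'\<close> by (auto simp: unitv_def)
    ultimately show "u v' * v' k = (if v' = v then u v else 0)"
      by simp
  qed
  also have "\<dots> = u v"
    using T(2) \<open>v \<in> T\<close> by simp
  finally show "u v = 0" ..
qed

lemma kdim_sender_space: "kdim (sender_space a :: (nat \<Rightarrow> 'a::field) set) = a"
proof -
  have "inj (unitv :: nat \<Rightarrow> nat \<Rightarrow> 'a)"
    by (rule injI) (simp add: unitv_eq_iff)
  then show ?thesis
    unfolding sender_space_def kspan_eq_span kdim_eq_dim V.dim_span
    by (simp add: V.dim_eq_card_independent[OF independent_unitv] card_image inj_on_subset)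
qed

lemma seen_le_bound:
  assumes "K \<subseteq> sender_space B" "seen K k"
  shows "1 \<le> k \<and> k \<le> B"
proof -
  obtain v where v: "v \<in> K" "v k = 1" "1 \<le> k"
    using assms(2) unfolding seen_def by blast
  then have "v \<in> sender_space B"
    using assms(1) by blast
  then have "\<not> B < k"
    using v(2) by (auto simp: mem_sender_space)
  then show ?thesis
    using v(3) by simp
qed

subsection \<open>Witnesses\<close>

lemma seen_mono: "K \<subseteq> K' \<Longrightarrow> seen K k \<Longrightarrow> seen K' k"
  unfolding seen_def by blast

lemma seen_if_leading_coeff:
  assumes "V.subspace K" "v \<in> K" "1 \<le> k" "v k \<noteq> 0" "\<forall>i<k. v i = 0"
  shows "seen K k"
proof -
  have "scl (inverse (v k)) v \<in> K"
    using assms(1,2) by (rule V.subspace_scale)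
  moreover have "scl (inverse (v k)) v k = 1" "\<forall>i<k. scl (inverse (v k)) v i = 0"
    using assms(4,5) by simp_all
  ultimately show ?thesis
    unfolding seen_def using assms(3) by blast
qed

lemma leading_index_seen:
  assumes "V.subspace K" "K \<subseteq> sender_space B" "v \<in> K" "v \<noteq> 0"
  obtains p where "v p \<noteq> 0" "\<forall>i<p. v i = 0" "seen K p"
proof -
  have ex: "\<exists>i. v i \<noteq> 0"
    using assms(4) by (auto simp: fun_eq_iff)
  define p where "p = (LEAST i. v i \<noteq> 0)"
  have "v p \<noteq> 0"
    unfolding p_def by (rule LeastI_ex[OF ex])
  moreover have "\<forall>i<p. v i = 0"
    unfolding p_def using not_less_Least by blast
  moreover have "v 0 = 0"
    using assms(2,3) by (auto simp: mem_sender_space)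
  ultimately have "1 \<le> p"
    by (cases p) auto
  then show thesis
    using that \<open>v p \<noteq> 0\<close> \<open>\<forall>i<p. v i = 0\<close> seen_if_leading_coeff[OF assms(1,3)] by blast
qed

definition is_witness :: "(nat \<Rightarrow> 'a::field) set \<Rightarrow> nat \<Rightarrow> (nat \<Rightarrow> 'a) \<Rightarrow> bool" where
  "is_witness K k w \<longleftrightarrow> w \<in> K \<and> w k = 1 \<and> (\<forall>i<k. w i = 0) \<and> (\<forall>i>k. seen K i \<longrightarrow> w i = 0)"

lemma witness_exists:
  assumes K: "V.subspace K" "K \<subseteq> sender_space B"
  shows "seen K k \<Longrightarrow> \<exists>w. is_witness K k w"
proof (induction "B - k" arbitrary: k rule: less_induct)
  case less
  define S where "S = {i. k < i \<and> seen K i}"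
  have "S \<subseteq> {..B}"
    using seen_le_bound[OF K(2)] unfolding S_def by auto
  then have "finite S"
    by (rule finite_subset) simp
  have "\<forall>i\<in>S. \<exists>w. is_witness K i w"
  proof
    fix i assume "i \<in> S"
    then have "k < i" "i \<le> B" "seen K i"
      using \<open>S \<subseteq> {..B}\<close> unfolding S_def by auto
    then show "\<exists>w. is_witness K i w"
      by (intro less.hyps) auto
  qed
  then obtain W where W: "\<forall>i\<in>S. is_witness K i (W i)"
    using bchoice by blast
  from less.prems obtain v where v: "v \<in> K" "v k = 1" "\<forall>i<k. v i = 0"
    unfolding seen_def by auto
  \<comment> \<open>Cancel the coefficients at the later seen packets by their witnesses.\<close>
  define w where "w = v - (\<Sum>i\<in>S. scl (v i) (W i))"
  have "w \<in> K"
    unfolding w_def using W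
    by (intro V.subspace_diff[OF K(1) v(1)] V.subspace_sum[OF K(1)] V.subspace_scale[OF K(1)])
      (simp add: is_witness_def)
  moreover have w_at: "w j = (if j \<in> S then 0 else v j)" if "j \<le> k \<or> seen K j" for j
  proof -
    have W_at: "W i j = (if j = i then 1 else 0)" if "i \<in> S" for i
      using W that \<open>j \<le> k \<or> seen K j\<close> unfolding S_def is_witness_def
      by (cases j i rule: linorder_cases) auto
    have "w j = v j - (\<Sum>i\<in>S. v i * W i j)"
      by (simp add: w_def sum_apply)
    also have "(\<Sum>i\<in>S. v i * W i j) = (\<Sum>i\<in>S. if j = i then v i else 0)"
      by (rule sum.cong) (simp_all add: W_at)
    finally show ?thesis
      using \<open>finite S\<close> by simp
  qed
  moreover have "k \<notin> S" "\<And>i. i < k \<Longrightarrow> i \<notin> S"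
    unfolding S_def by auto
  ultimately have "is_witness K k w"
    using v unfolding is_witness_def by (auto simp: S_def)
  then show ?case
    by blast
qed

lemma witness_unique:
  assumes K: "V.subspace K" "K \<subseteq> sender_space B"
    and "is_witness K k w1" "is_witness K k w2"
  shows "w1 = w2"
proof (rule ccontr)
  assume "w1 \<noteq> w2"
  then have "w1 - w2 \<noteq> 0"
    by simp
  moreover have "w1 - w2 \<in> K"
    using assms(3,4) unfolding is_witness_def by (auto intro: V.subspace_diff[OF K(1)])
  ultimately obtain p where p: "(w1 - w2) p \<noteq> 0" "seen K p"
    using leading_index_seen[OF K] by metis
  have "(w1 - w2) i = 0" if "i \<le> k \<or> seen K i" for i
    using assms(3,4) that unfolding is_witness_def by (cases i k rule: linorder_cases) auto
  then show False
    using p by blast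
qed

lemma is_witness_witness:
  assumes K: "V.subspace K" "K \<subseteq> sender_space B" and "seen K k"
  shows "is_witness K k (witness K k)"
proof -
  obtain w where "is_witness K k w"
    using witness_exists[OF K assms(3)] by blast
  moreover have "witness K k = (THE w. is_witness K k w)"
    by (simp add: witness_def is_witness_def)
  ultimately show ?thesis
    using witness_unique[OF K] the_equality[of "is_witness K k"] by simp
qed

lemma witness_at_seen:
  assumes K: "V.subspace K" "K \<subseteq> sender_space B" and "seen K k" "seen K i"
  shows "witness K k i = (if i = k then 1 else 0)"
  using is_witness_witness[OF K assms(3)] assms(4) unfolding is_witness_def
  by (cases i k rule: linorder_cases) auto

lemma witness_combination_at_seen:
  assumes K: "V.subspace K" "K \<subseteq> sender_space B"
    and "finite U" "\<forall>u\<in>U. seen K u" "seen K i"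
  shows "(\<Sum>u\<in>U. scl (\<alpha> u) (witness K u)) i = (if i \<in> U then \<alpha> i else 0)"
proof -
  have "(\<Sum>u\<in>U. scl (\<alpha> u) (witness K u)) i = (\<Sum>u\<in>U. \<alpha> u * witness K u i)"
    by (simp add: sum_apply)
  also have "\<dots> = (\<Sum>u\<in>U. if i = u then \<alpha> u else 0)"
    using assms(4,5) witness_at_seen[OF K] by (intro sum.cong) auto
  finally show ?thesis
    using assms(3) by simp
qed

subsection \<open>Seen prefixes\<close>

definition seen_prefix :: "(nat \<Rightarrow> 'a::field) set \<Rightarrow> nat \<Rightarrow> bool" where
  "seen_prefix K m \<longleftrightarrow> {k. seen K k} = {1..m}"

lemma seen_prefix_iff: "seen_prefix K m \<Longrightarrow> seen K k \<longleftrightarrow> 1 \<le> k \<and> k \<le> m"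
  unfolding seen_prefix_def by (metis atLeastAtMost_iff mem_Collect_eq)

lemma next_unseen_seen_prefix: "seen_prefix K m \<Longrightarrow> next_unseen K = Suc m"
  unfolding next_unseen_def by (rule Least_equality) (auto simp: seen_prefix_iff)

lemma num_seen_seen_prefix: "seen_prefix K m \<Longrightarrow> num_seen K = m"
  by (simp add: num_seen_def seen_prefix_def)

lemma seen_prefix_le:
  assumes "seen_prefix K m" "seen_prefix K' m'" "K \<subseteq> K'"
  shows "m \<le> m'"
  using seen_mono[OF assms(3), of m] assms(1,2) by (cases m) (auto simp: seen_prefix_iff)

lemma next_unseen_ge_1:
  assumes "K \<subseteq> sender_space B"
  shows "1 \<le> next_unseen K"
proof -
  have "1 \<le> Suc B \<and> \<not> seen K (Suc B)"
    using seen_le_bound[OF assms] by fastforce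
  then show ?thesis
    unfolding next_unseen_def by (rule LeastI2) simp
qed

lemma decoding_event_if_seen_prefix:
  assumes K: "V.subspace K" "K \<subseteq> sender_space m" and "seen_prefix K m"
  shows "decoding_event K"
  unfolding decoding_event_def decoded_def
proof (intro allI impI)
  fix k assume "seen K k"
  then have k: "1 \<le> k \<and> k \<le> m"
    using seen_le_bound[OF K(2)] by blast
  have "witness K k i = unitv k i" for i
  proof (cases "1 \<le> i \<and> i \<le> m")
    case True
    then show ?thesis
      using witness_at_seen[OF K \<open>seen K k\<close>] assms(3) by (simp add: seen_prefix_iff unitv_def)
  next
    case False
    have "witness K k \<in> sender_space m"
      using is_witness_witness[OF K \<open>seen K k\<close>] K(2) unfolding is_witness_def by blast
    then show ?thesis
      using False k by (auto simp: mem_sender_space unitv_def not_le)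
  qed
  then have "witness K k = unitv k" ..
  then show "unitv k \<in> K"
    using is_witness_witness[OF K \<open>seen K k\<close>] unfolding is_witness_def by simp
qed

text \<open>Adding one vector makes at most one more packet seen: from two new ones, a combination
  of their two representatives with the new vector cancelled would already see the smaller one.\<close>

lemma seen_insert_unique:
  assumes "seen (V.span (insert w X)) p" "\<not> seen (V.span X) p"
    and "seen (V.span (insert w X)) q" "\<not> seen (V.span X) q"
  shows "p = q"
proof -
  have False if p: "seen (V.span (insert w X)) p" "\<not> seen (V.span X) p"
    and q: "seen (V.span (insert w X)) q" "\<not> seen (V.span X) q" and "p < q" for p q
  proof -
    from p(1) obtain vp where vp: "vp \<in> V.span (insert w X)" "vp p = 1" "\<forall>i<p. vp i = 0" "1 \<le> p"
      unfolding seen_def by auto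
    from q(1) obtain vq where vq: "vq \<in> V.span (insert w X)" "vq q = 1" "\<forall>i<q. vq i = 0"
      unfolding seen_def by auto
    obtain a where a: "vp - scl a w \<in> V.span X"
      using vp(1) V.span_breakdown_eq by blast
    obtain b where b: "vq - scl b w \<in> V.span X"
      using vq(1) V.span_breakdown_eq by blast
    have "b \<noteq> 0"
      using b q vq \<open>p < q\<close> unfolding seen_def by (auto simp: scl_def)
    define z where "z = (vp - scl a w) - scl (a / b) (vq - scl b w)"
    have "z \<in> V.span X"
      unfolding z_def by (rule V.span_diff[OF a V.span_scale[OF b]])
    moreover have "z i = vp i - (a / b) * vq i" for i
      using \<open>b \<noteq> 0\<close> by (simp add: z_def algebra_simps)
    ultimately have "seen (V.span X) p"
      unfolding seen_def using vp vq \<open>p < q\<close> by (intro conjI bexI[of _ z]) auto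
    with p(2) show False ..
  qed
  then show ?thesis
    using assms by (metis linorder_neqE_nat)
qed

lemma seen_prefix_insert:
  assumes "seen_prefix (V.span X) m" "seen (V.span (insert w X)) (Suc m)"
  shows "seen_prefix (V.span (insert w X)) (Suc m)"
proof -
  have old: "seen (V.span X) k \<longleftrightarrow> 1 \<le> k \<and> k \<le> m" for k
    using assms(1) by (rule seen_prefix_iff)
  have "V.span X \<subseteq> V.span (insert w X)"
    by (rule V.span_mono) blast
  have "seen (V.span (insert w X)) k \<longleftrightarrow> 1 \<le> k \<and> k \<le> Suc m" for k
  proof
    assume new: "seen (V.span (insert w X)) k"
    show "1 \<le> k \<and> k \<le> Suc m"
    proof (cases "seen (V.span X) k")
      case False
      then have "k = Suc m"
        using seen_insert_unique[OF new False assms(2)] old[of "Suc m"] by simp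
      then show ?thesis
        by simp
    qed (simp add: old)
  next
    assume "1 \<le> k \<and> k \<le> Suc m"
    then show "seen (V.span (insert w X)) k"
      using assms(2) old seen_mono[OF \<open>V.span X \<subseteq> V.span (insert w X)\<close>]
      by (cases "k = Suc m") auto
  qed
  then show ?thesis
    unfolding seen_prefix_def set_eq_iff by simp
qed

lemma seen_prefix_superspace:
  assumes "seen_prefix K m" "K \<subseteq> K'" "K' \<subseteq> sender_space m"
  shows "seen_prefix K' m"
proof -
  have "seen K' k \<longleftrightarrow> 1 \<le> k \<and> k \<le> m" for k
    using seen_mono[OF assms(2), of k] seen_le_bound[OF assms(3), of k] seen_prefix_iff[OF assms(1), of k]
    by blast
  then show ?thesis
    unfolding seen_prefix_def set_eq_iff by simp
qed

subsection \<open>Runs of the coding algorithm\<close>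

locale algorithm_2b =
  fixes n :: nat and A :: "nat \<Rightarrow> nat" and rcv :: "nat \<Rightarrow> nat \<Rightarrow> bool"
    and c :: "nat \<Rightarrow> nat \<Rightarrow> 'a::field"
  assumes mono_arrivals: "mono A"
    and coding: "coding_ok n (A s) (know rcv c s) (c s)"
begin

definition received :: "nat \<Rightarrow> nat \<Rightarrow> (nat \<Rightarrow> 'a) set" where
  "received s r = {c s' | s'. s' < s \<and> rcv s' r}"

definition coded_indices :: "nat \<Rightarrow> nat set" where
  "coded_indices s = {next_unseen (know rcv c s r) | r. r < n \<and> next_unseen (know rcv c s r) \<le> A s}"

lemma know_eq_span: "know rcv c s r = V.span (received s r)"
  unfolding know_def received_def kspan_eq_span ..

lemma subspace_know: "V.subspace (know rcv c s r)"
  unfolding know_eq_span by (rule V.subspace_span)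

lemma know_mono: "s \<le> s' \<Longrightarrow> know rcv c s r \<subseteq> know rcv c s' r"
  unfolding know_eq_span received_def by (rule V.span_mono) auto

lemma know_Suc:
  "know rcv c (Suc s) r = (if rcv s r then V.span (insert (c s) (received s r)) else know rcv c s r)"
  unfolding know_eq_span received_def by (auto simp: less_Suc_eq intro!: arg_cong[of _ _ V.span])

lemma know_in_sender_space_if:
  "(\<And>s'. s' < s \<Longrightarrow> c s' \<in> sender_space b) \<Longrightarrow> know rcv c s r \<subseteq> sender_space b"
  unfolding know_eq_span received_def by (rule V.span_minimal[OF _ subspace_sender_space]) auto

lemma coded_indices_subset:
  assumes "\<And>r. know rcv c s r \<subseteq> sender_space B"
  shows "coded_indices s \<subseteq> {1..A s}"
  using next_unseen_ge_1[OF assms] unfolding coded_indices_def by auto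

lemma transmission_coefficients:
  assumes "\<And>r. know rcv c s r \<subseteq> sender_space B"
  obtains \<alpha> where
    "\<And>r. r < n \<Longrightarrow> next_unseen (know rcv c s r) \<in> coded_indices s \<Longrightarrow>
      \<alpha> (next_unseen (know rcv c s r)) \<noteq>
        (\<Sum>u'\<in>{u'\<in>coded_indices s. u' < next_unseen (know rcv c s r)}.
           scl (\<alpha> u') (witness (know rcv c s r) u')) (next_unseen (know rcv c s r))"
    and "\<And>i. c s i = (if i \<in> coded_indices s then \<alpha> i else 0)"
proof -
  obtain \<alpha> where
    \<alpha>: "\<And>r. r < n \<Longrightarrow> next_unseen (know rcv c s r) \<in> coded_indices s \<Longrightarrow>
      \<alpha> (next_unseen (know rcv c s r)) \<noteq>
        (\<Sum>u'\<in>{u'\<in>coded_indices s. u' < next_unseen (know rcv c s r)}.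
           scl (\<alpha> u') (witness (know rcv c s r) u')) (next_unseen (know rcv c s r))"
    and c: "c s = (\<Sum>u\<in>coded_indices s. scl (\<alpha> u) (unitv u))"
    using coding[of s] unfolding coding_ok_def Let_def coded_indices_def by blast
  have "finite (coded_indices s)"
    using coded_indices_subset[OF assms] by (rule finite_subset) simp
  then have "c s i = (if i \<in> coded_indices s then \<alpha> i else 0)" for i
    unfolding c by (rule sum_unitv_apply)
  with \<alpha> show thesis
    by (rule that)
qed

lemma transmission_in_sender_space: "c s \<in> sender_space (A s)"
proof (induction s rule: less_induct)
  case (less s)
  have "c s' \<in> sender_space (A s)" if "s' < s" for s'
    by (rule subsetD[OF sender_space_mono[OF monoD[OF mono_arrivals less_imp_le[OF that]]] less[OF that]])
  then have know: "know rcv c s r \<subseteq> sender_space (A s)" for r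
    by (rule know_in_sender_space_if)
  obtain \<alpha> where "\<And>i. c s i = (if i \<in> coded_indices s then \<alpha> i else 0)"
    using transmission_coefficients[OF know] by blast
  then show ?case
    using coded_indices_subset[OF know] by (auto simp: mem_sender_space)
qed

lemma transmission_in_later_sender_space: "s' \<le> s \<Longrightarrow> c s' \<in> sender_space (A s)"
  by (rule subsetD[OF sender_space_mono[OF monoD[OF mono_arrivals]] transmission_in_sender_space])

lemma know_in_sender_space: "know rcv c s r \<subseteq> sender_space (A s)"
  by (rule know_in_sender_space_if) (simp add: transmission_in_later_sender_space)

lemma know_Suc_in_sender_space: "know rcv c (Suc s) r \<subseteq> sender_space (A s)"
  by (rule know_in_sender_space_if) (simp add: transmission_in_later_sender_space)

text \<open>The coefficient rule of the coding module is exactly what makes a receiver that gets the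
  packet see its next unseen packet: subtracting from the received vector the witnesses of the
  earlier coded packets leaves a vector whose leading coefficient sits at that packet.\<close>

lemma reception_sees_next_unseen:
  assumes "r < n" "rcv s r" "seen_prefix (know rcv c s r) m" "Suc m \<le> A s"
  shows "seen (know rcv c (Suc s) r) (Suc m)"
proof -
  define K where "K = know rcv c s r"
  have K: "V.subspace K" "K \<subseteq> sender_space (A s)"
    unfolding K_def by (rule subspace_know, rule know_in_sender_space)
  have next_unseen: "next_unseen K = Suc m"
    unfolding K_def using assms(3) by (rule next_unseen_seen_prefix)
  then have coded: "Suc m \<in> coded_indices s"
    using assms(1,4) unfolding coded_indices_def K_def by force
  obtain \<alpha> where
    \<alpha>: "\<And>r. r < n \<Longrightarrow> next_unseen (know rcv c s r) \<in> coded_indices s \<Longrightarrow>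
      \<alpha> (next_unseen (know rcv c s r)) \<noteq>
        (\<Sum>u'\<in>{u'\<in>coded_indices s. u' < next_unseen (know rcv c s r)}.
           scl (\<alpha> u') (witness (know rcv c s r) u')) (next_unseen (know rcv c s r))"
    and c: "\<And>i. c s i = (if i \<in> coded_indices s then \<alpha> i else 0)"
    using transmission_coefficients[of s, OF know_in_sender_space] by blast
  have \<alpha>_next: "\<alpha> (Suc m) \<noteq> (\<Sum>u\<in>{u\<in>coded_indices s. u < Suc m}. scl (\<alpha> u) (witness K u)) (Suc m)"
    using \<alpha>[OF assms(1)] coded next_unseen unfolding K_def by simp
  define U where "U = {u\<in>coded_indices s. u < Suc m}"
  define y where "y = (\<Sum>u\<in>U. scl (\<alpha> u) (witness K u))"
  have "U \<subseteq> {1..m}"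
    using coded_indices_subset[of s, OF know_in_sender_space] unfolding U_def by auto
  then have "finite U"
    by (rule finite_subset) simp
  have U_seen: "\<forall>u\<in>U. seen K u"
    using \<open>U \<subseteq> {1..m}\<close> assms(3) unfolding K_def by (auto simp: seen_prefix_iff)
  have "y \<in> K"
    unfolding y_def using is_witness_witness[OF K] U_seen
    by (intro V.subspace_sum[OF K(1)] V.subspace_scale[OF K(1)]) (auto simp: is_witness_def)
  have y_low: "y i = c s i" if "i < Suc m" for i
  proof (cases "i = 0")
    case True
    then show ?thesis
      using \<open>y \<in> K\<close> K(2) transmission_in_sender_space[of s] by (auto simp: mem_sender_space)
  next
    case False
    then have "seen K i"
      using that assms(3) unfolding K_def by (simp add: seen_prefix_iff)
    then show ?thesis
      unfolding y_def using witness_combination_at_seen[OF K \<open>finite U\<close> U_seen] that c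
      by (simp add: U_def)
  qed
  have "c s \<in> know rcv c (Suc s) r"
    using assms(2) by (simp add: know_Suc V.span_base)
  moreover have "y \<in> know rcv c (Suc s) r"
    using \<open>y \<in> K\<close> know_mono[of s "Suc s" r] unfolding K_def by auto
  ultimately have mem: "c s - y \<in> know rcv c (Suc s) r"
    by (rule V.subspace_diff[OF subspace_know])
  have nonzero: "(c s - y) (Suc m) \<noteq> 0"
    using \<alpha>_next c coded unfolding y_def U_def by simp
  have below: "\<forall>i<Suc m. (c s - y) i = 0"
    using y_low by simp
  show ?thesis
    by (rule seen_if_leading_coeff[OF subspace_know mem _ nonzero below]) simp
qed

lemma reception_extends_seen_prefix:
  assumes "r < n" "rcv s r" "seen_prefix (know rcv c s r) m" "Suc m \<le> A s"
  shows "seen_prefix (know rcv c (Suc s) r) (Suc m)"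
proof -
  have eq: "know rcv c (Suc s) r = V.span (insert (c s) (received s r))"
    using assms(2) by (simp add: know_Suc)
  have "seen_prefix (V.span (received s r)) m"
    using assms(3) by (simp add: know_eq_span)
  moreover have "seen (V.span (insert (c s) (received s r))) (Suc m)"
    using reception_sees_next_unseen[OF assms] unfolding eq .
  ultimately show ?thesis
    unfolding eq by (rule seen_prefix_insert)
qed

lemma seen_prefix_without_arrivals:
  assumes "seen_prefix (know rcv c s r) m" "A s \<le> m"
  shows "seen_prefix (know rcv c (Suc s) r) m"
  using assms(1) know_mono[of s "Suc s" r]
    order.trans[OF know_Suc_in_sender_space sender_space_mono[OF assms(2)]]
  by (rule seen_prefix_superspace) simp

lemma seen_prefix_exists: "r < n \<Longrightarrow> \<exists>m. seen_prefix (know rcv c s r) m"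
proof (induction s)
  case 0
  have "know rcv c 0 r = {0}"
    by (simp add: know_eq_span received_def)
  then have "seen_prefix (know rcv c 0 r) 0"
    by (auto simp: seen_prefix_def seen_def)
  then show ?case ..
next
  case (Suc s)
  then obtain m where m: "seen_prefix (know rcv c s r) m"
    by blast
  consider "\<not> rcv s r" | "rcv s r" "Suc m \<le> A s" | "A s \<le> m"
    by linarith
  then show ?case
  proof cases
    case 1
    then show ?thesis
      using m by (auto simp: know_Suc)
  qed (use m Suc.prems reception_extends_seen_prefix seen_prefix_without_arrivals in blast)+
qed

text \<open>A leader's next unseen packet has the largest index among all receivers, so up to the current
  slot no transmission has involved a packet beyond it.\<close>

lemma leader_bounds_transmissions:
  assumes "is_leader n (know rcv c t) j" "seen_prefix (know rcv c t j) m" "s \<le> t"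
  shows "c s \<in> sender_space (Suc m)"
proof -
  have bound: "u \<le> Suc m" if "u \<in> coded_indices s" for u
  proof -
    obtain r where r: "r < n" "u = next_unseen (know rcv c s r)"
      using \<open>u \<in> coded_indices s\<close> unfolding coded_indices_def by blast
    obtain m\<^sub>s m\<^sub>t where m\<^sub>s: "seen_prefix (know rcv c s r) m\<^sub>s" and m\<^sub>t: "seen_prefix (know rcv c t r) m\<^sub>t"
      using seen_prefix_exists[OF r(1)] by blast
    have "num_seen (know rcv c t r) \<le> num_seen (know rcv c t j)"
      using assms(1) r(1) unfolding is_leader_def by blast
    then have "m\<^sub>t \<le> m"
      by (simp add: num_seen_seen_prefix[OF m\<^sub>t] num_seen_seen_prefix[OF assms(2)])
    moreover have "m\<^sub>s \<le> m\<^sub>t"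
      using m\<^sub>s m\<^sub>t know_mono[OF assms(3)] by (rule seen_prefix_le)
    ultimately show ?thesis
      using r(2) next_unseen_seen_prefix[OF m\<^sub>s] by simp
  qed
  obtain \<alpha> where c: "\<And>i. c s i = (if i \<in> coded_indices s then \<alpha> i else 0)"
    using transmission_coefficients[of s, OF know_in_sender_space] by blast
  have "c s i = 0" if "Suc m < i" for i
    using c[of i] bound[of i] that by (cases "i \<in> coded_indices s") auto
  moreover have "c s 0 = 0"
    using transmission_in_sender_space[of s] by (simp add: mem_sender_space)
  ultimately show ?thesis
    by (simp add: mem_sender_space)
qed

lemma leader_reception_decodes:
  assumes "j < n" "rcv t j" "is_leader n (know rcv c t) j"
  shows "decoding_event (know rcv c (Suc t) j)"
proof -
  obtain m where m: "seen_prefix (know rcv c t j) m"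
    using seen_prefix_exists[OF assms(1)] by blast
  show ?thesis
  proof (cases "Suc m \<le> A t")
    case True
    have "know rcv c (Suc t) j \<subseteq> sender_space (Suc m)"
      using leader_bounds_transmissions[OF assms(3) m] by (intro know_in_sender_space_if) simp
    then show ?thesis
      using reception_extends_seen_prefix[OF assms(1,2) m True]
      by (intro decoding_event_if_seen_prefix[OF subspace_know])
  next
    case False
    then have "know rcv c (Suc t) j \<subseteq> sender_space m"
      using know_Suc_in_sender_space sender_space_mono[of "A t" m] by force
    then show ?thesis
      using seen_prefix_without_arrivals[OF m] False
      by (intro decoding_event_if_seen_prefix[OF subspace_know]) simp_all
  qed
qed

lemma empty_queue_decodes:
  assumes "vqueue (A t) (know rcv c (Suc t) j) = 0"
  shows "decoding_event (know rcv c (Suc t) j)"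
proof -
  define K where "K = know rcv c (Suc t) j"
  define W where "W = (unitv ` {1..A t} :: (nat \<Rightarrow> 'a) set)"
  have K: "V.subspace K" "K \<subseteq> sender_space (A t)"
    unfolding K_def by (rule subspace_know, rule know_Suc_in_sender_space)
  have "kdim (sender_space (A t) :: (nat \<Rightarrow> 'a) set) = A t"
    by (rule kdim_sender_space)
  then have "card W \<le> V.dim K"
    using assms unfolding vqueue_def kdim_eq_dim K_def W_def
    by (simp add: card_image inj_on_def unitv_eq_iff)
  moreover have "K \<subseteq> V.span W"
    using K(2) unfolding W_def sender_space_def kspan_eq_span .
  ultimately have "W \<subseteq> K"
    using V.subspace_full_dim_contains_spanning_set[OF K(1)] unfolding W_def by blast
  then show ?thesis
    using seen_le_bound[OF K(2)] unfolding decoding_event_def decoded_def K_def W_def by auto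
qed

end

text \<open>The bound on the field size is what guarantees that a coefficient choice as in the coding
  module exists; here that existence is part of the hypothesis \<open>coding_ok\<close>.\<close>

theorem theorem10:
  fixes n :: nat and A :: "nat \<Rightarrow> nat" and rcv :: "nat \<Rightarrow> nat \<Rightarrow> bool"
    and c :: "nat \<Rightarrow> nat \<Rightarrow> 'a::{field,finite}" and t j :: nat
  assumes "card (UNIV :: 'a set) \<ge> n"
    and "mono A"
    and "\<forall>s. coding_ok n (A s) (know rcv c s) (c s)"
    and "j < n"
    and "rcv t j"
    and "vqueue (A t) (know rcv c (Suc t) j) = 0 \<or> is_leader n (know rcv c t) j"
  shows "decoding_event (know rcv c (Suc t) j)"
proof -
  interpret algorithm_2b n A rcv c
    using assms(2,3) by unfold_locales blast+
  show ?thesis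
    using assms(4-6) empty_queue_decodes leader_reception_decodes by blast
qed

end
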